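(* Let $f$ be a homeomorphism of a compact metric space $X$ and suppose $f|_{\Omega(f)}$ is expansive with expansivity constant $c>0$. Then $W^s_c(x)\subset W^s(x)$ and $W^u_c(x)\subset W^u(x)$ for every $x\in X$.
   Context: $\Omega(f)$ is the non-wandering set. $c>0$ is an expansivity constant of $f|_{\Omega(f)}$ if for all distinct $x,y\in\Omega(f)$ there is $n\in\mathbb{Z}$ with $d(f^n(x),f^n(y))>c$. $W^s_c(x)=\{y: d(f^n(x),f^n(y))\le c\ \forall n\ge0\}$, $W^u_c(x)=\{y: d(f^{-n}(x),f^{-n}(y))\le c\ \forall n\ge0\}$, $W^s(x)=\{y: d(f^n(x),f^n(y))\to0\ (n\to+\infty)\}$, $W^u(x)=\{y: d(f^{-n}(x),f^{-n}(y))\to0\ (n\to+\infty)\}$. *)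

theory Defs
  imports "HOL-Analysis.Analysis"
begin

definition iter_int :: "('a \<Rightarrow> 'a) \<Rightarrow> ('a \<Rightarrow> 'a) \<Rightarrow> int \<Rightarrow> 'a \<Rightarrow> 'a" where
  "iter_int f g n = (if 0 \<le> n then f ^^ nat n else g ^^ nat (- n))"

definition nonwandering :: "'a::metric_space set \<Rightarrow> ('a \<Rightarrow> 'a) \<Rightarrow> 'a set" where
  "nonwandering X f = {x \<in> X. \<forall>U. openin (top_of_set X) U \<and> x \<in> U \<longrightarrow>
      (\<exists>n::nat. n \<ge> 1 \<and> (f ^^ n) ` U \<inter> U \<noteq> {})}"

definition expansive_const_on :: "'a::metric_space set \<Rightarrow> ('a \<Rightarrow> 'a) \<Rightarrow> ('a \<Rightarrow> 'a) \<Rightarrow> real \<Rightarrow> bool" where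
  "expansive_const_on A f g c \<longleftrightarrow> c > 0 \<and>
     (\<forall>x\<in>A. \<forall>y\<in>A. x \<noteq> y \<longrightarrow> (\<exists>n::int. dist (iter_int f g n x) (iter_int f g n y) > c))"

definition local_stable :: "'a::metric_space set \<Rightarrow> ('a \<Rightarrow> 'a) \<Rightarrow> real \<Rightarrow> 'a \<Rightarrow> 'a set" where
  "local_stable X f c x = {y \<in> X. \<forall>n::nat. dist ((f ^^ n) x) ((f ^^ n) y) \<le> c}"

definition stable_set :: "'a::metric_space set \<Rightarrow> ('a \<Rightarrow> 'a) \<Rightarrow> 'a \<Rightarrow> 'a set" where
  "stable_set X f x = {y \<in> X. (\<lambda>n. dist ((f ^^ n) x) ((f ^^ n) y)) \<longlonglongrightarrow> 0}"

text \<open>Unstable sets are the stable sets of the inverse g.\<close>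

end

theory Submission
  imports Defs
begin

text \<open>If \<open>y \<in> W\<^sup>s\<^sub>c(x)\<close> were not asymptotic to \<open>x\<close>, compactness would give times \<open>t\<^sub>k \<rightarrow> \<infinity>\<close>
  along which \<open>f\<^bsup>t\<^sub>k\<^esup> x \<rightarrow> p\<close> and \<open>f\<^bsup>t\<^sub>k\<^esup> y \<rightarrow> q\<close> with \<open>p \<noteq> q\<close>. Both limits are \<open>\<omega>\<close>-limit points,
  hence non-wandering, and by continuity every integer iterate of \<open>p\<close> and \<open>q\<close> stays
  \<open>c\<close>-close, since \<open>f\<^sup>m\<close> applied at time \<open>t\<^sub>k\<close> is the orbit at time \<open>t\<^sub>k + m \<ge> 0\<close> for large \<open>k\<close>.
  This contradicts expansivity on \<open>\<Omega>(f)\<close>. The unstable case is the stable case for \<open>f\<^sup>-\<^sup>1\<close>,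
  which has the same non-wandering set and expansivity constant.\<close>

lemma homeomorphism_funpow:
  assumes "homeomorphism X X f g"
  shows "homeomorphism X X (f ^^ n) (g ^^ n)"
proof (induction n)
  case 0
  then show ?case using homeomorphism_ident by (simp add: id_def)
next
  case (Suc n)
  show ?case
    using homeomorphism_compose[OF Suc.IH assms] by (metis funpow.simps(2) funpow_Suc_right)
qed

lemma homeomorphism_iter_int:
  assumes "homeomorphism X X f g"
  shows "homeomorphism X X (iter_int f g m) (iter_int f g (- m))"
proof (cases "0 \<le> m")
  case True
  then show ?thesis
    using homeomorphism_funpow[OF assms, of "nat m"] homeomorphism_ident
    by (cases "m = 0") (auto simp: iter_int_def id_def)
next
  case False
  then show ?thesis
    using homeomorphism_funpow[OF homeomorphism_symD[OF assms], of "nat (- m)"]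
    by (simp add: iter_int_def)
qed

lemma iter_int_funpow:
  assumes hom: "homeomorphism X X f g" and "z \<in> X" and "0 \<le> int n + m"
  shows "iter_int f g m ((f ^^ n) z) = (f ^^ nat (int n + m)) z"
proof (cases "0 \<le> m")
  case True
  then have "nat (int n + m) = nat m + n" by simp
  with True show ?thesis by (simp add: iter_int_def funpow_add)
next
  case False
  define j where "j = nat (- m)"
  have n_split: "n = j + nat (int n + m)" using False assms(3) unfolding j_def by simp
  have "(f ^^ nat (int n + m)) z \<in> X"
    using homeomorphism_image1[OF homeomorphism_funpow[OF hom]] \<open>z \<in> X\<close> by blast
  then have "(g ^^ j) ((f ^^ j) ((f ^^ nat (int n + m)) z)) = (f ^^ nat (int n + m)) z"
    using homeomorphism_apply1[OF homeomorphism_funpow[OF hom]] by blast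
  then show ?thesis using False
    by (subst n_split) (simp add: iter_int_def j_def funpow_add)
qed

lemma iter_int_swap: "iter_int g f (- n) = iter_int f g n"
  by (simp add: iter_int_def)

lemma expansive_const_on_swap:
  assumes "expansive_const_on A f g c"
  shows "expansive_const_on A g f c"
  using assms unfolding expansive_const_on_def by (metis iter_int_swap)

lemma omega_limit_in_nonwandering:
  assumes fX: "f ` X \<subseteq> X" and "z \<in> X" and r: "strict_mono r"
    and lim: "(\<lambda>k. (f ^^ r k) z) \<longlonglongrightarrow> p" and "p \<in> X"
  shows "p \<in> nonwandering X f"
  unfolding nonwandering_def
proof (intro CollectI conjI allI impI)
  fix U assume U: "openin (top_of_set X) U \<and> p \<in> U"
  then obtain V where V: "open V" "U = X \<inter> V" by (meson openin_open)
  have "\<forall>\<^sub>F k in sequentially. (f ^^ r k) z \<in> V"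
    using topological_tendstoD[OF lim V(1)] V(2) U by simp
  then obtain N where N: "\<And>k. k \<ge> N \<Longrightarrow> (f ^^ r k) z \<in> V"
    by (auto simp: eventually_sequentially)
  have orbit_X: "(f ^^ k) z \<in> X" for k
    using \<open>z \<in> X\<close> fX by (induction k) auto
  have in_U: "(f ^^ r k) z \<in> U" if "k \<ge> N" for k
    using N[OF that] orbit_X V(2) by blast
  define n where "n = r (Suc N) - r N"
  have "r N < r (Suc N)" using r by (simp add: strict_mono_def)
  then have "n \<ge> 1" and "n + r N = r (Suc N)" unfolding n_def by auto
  then have "(f ^^ n) ((f ^^ r N) z) = (f ^^ r (Suc N)) z" by (metis funpow_add o_apply)
  then have "(f ^^ r (Suc N)) z \<in> (f ^^ n) ` U \<inter> U" using in_U by force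
  with \<open>n \<ge> 1\<close> show "\<exists>n\<ge>1. (f ^^ n) ` U \<inter> U \<noteq> {}" by blast
qed (fact \<open>p \<in> X\<close>)

lemma nonwandering_inverse_subset:
  assumes hom: "homeomorphism X X f g"
  shows "nonwandering X g \<subseteq> nonwandering X f"
proof
  fix x assume x: "x \<in> nonwandering X g"
  have "\<exists>n\<ge>1. (f ^^ n) ` U \<inter> U \<noteq> {}" if U: "openin (top_of_set X) U" "x \<in> U" for U
  proof -
    obtain n u where "n \<ge> 1" "u \<in> U" "(g ^^ n) u \<in> U"
      using x U unfolding nonwandering_def by blast
    moreover have "(f ^^ n) ((g ^^ n) u) = u"
      using homeomorphism_apply2[OF homeomorphism_funpow[OF hom]] \<open>u \<in> U\<close> openin_imp_subset[OF U(1)]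
      by blast
    ultimately show ?thesis by force
  qed
  with x show "x \<in> nonwandering X f" unfolding nonwandering_def by blast
qed

lemma nonwandering_inverse:
  assumes "homeomorphism X X f g"
  shows "nonwandering X g = nonwandering X f"
  using nonwandering_inverse_subset[OF assms] nonwandering_inverse_subset[OF homeomorphism_symD[OF assms]]
  by blast

lemma not_stable_imp_distinct_limits:
  assumes "compact X" and fX: "f ` X \<subseteq> X" and "x \<in> X" "y \<in> X"
    and "y \<notin> stable_set X f x"
  obtains t p q where "strict_mono t" "p \<in> X" "q \<in> X" "p \<noteq> q"
    "(\<lambda>k. (f ^^ t k) x) \<longlonglongrightarrow> p" "(\<lambda>k. (f ^^ t k) y) \<longlonglongrightarrow> q"
proof -
  define h where "h n = dist ((f ^^ n) x) ((f ^^ n) y)" for n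
  have orbit_X: "(f ^^ n) z \<in> X" if "z \<in> X" for z n
    using that fX by (induction n) auto
  have "\<not> h \<longlonglongrightarrow> 0" using assms(4,5) unfolding stable_set_def h_def by auto
  then obtain e where "e > 0" and "\<forall>N. \<exists>n\<ge>N. e \<le> h n"
    unfolding LIMSEQ_iff by (auto simp: not_less h_def)
  then have "infinite {n. e \<le> h n}"
    by (simp add: infinite_nat_iff_unbounded_le)
  then obtain s :: "nat \<Rightarrow> nat" where s: "strict_mono s" "\<And>k. e \<le> h (s k)"
    using infinite_enumerate by blast
  define u where "u k = ((f ^^ s k) x, (f ^^ s k) y)" for k
  have "\<forall>k. u k \<in> X \<times> X" unfolding u_def using orbit_X assms(3,4) by simp
  then obtain l r where l: "l \<in> X \<times> X" "strict_mono r" "(u \<circ> r) \<longlonglongrightarrow> l"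
    using compact_imp_seq_compact[OF compact_Times[OF \<open>compact X\<close> \<open>compact X\<close>]]
    by (meson seq_compactE)
  define t where "t = s \<circ> r"
  have px: "(\<lambda>k. (f ^^ t k) x) \<longlonglongrightarrow> fst l" and qy: "(\<lambda>k. (f ^^ t k) y) \<longlonglongrightarrow> snd l"
    using tendsto_fst[OF l(3)] tendsto_snd[OF l(3)] unfolding u_def t_def by (simp_all add: o_def)
  have "e \<le> dist (fst l) (snd l)"
    by (rule LIMSEQ_le_const[OF tendsto_dist[OF px qy]]) (use s(2) in \<open>simp add: t_def h_def\<close>)
  with \<open>e > 0\<close> have "fst l \<noteq> snd l" by auto
  moreover have "strict_mono t" unfolding t_def using s(1) l(2) by (rule strict_mono_o)
  ultimately show ?thesis using that l(1) px qy by (auto simp: mem_Times_iff)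
qed

lemma local_stable_limits_close:
  assumes hom: "homeomorphism X X f g" and "x \<in> X" and "y \<in> local_stable X f c x"
    and t: "strict_mono t" and "p \<in> X" "q \<in> X"
    and px: "(\<lambda>k. (f ^^ t k) x) \<longlonglongrightarrow> p" and qy: "(\<lambda>k. (f ^^ t k) y) \<longlonglongrightarrow> q"
  shows "dist (iter_int f g m p) (iter_int f g m q) \<le> c"
proof -
  have "y \<in> X" and close: "\<And>n. dist ((f ^^ n) x) ((f ^^ n) y) \<le> c"
    using assms(3) unfolding local_stable_def by auto
  have orbit_X: "\<forall>\<^sub>F k in sequentially. (f ^^ t k) z \<in> X" if "z \<in> X" for z
    using homeomorphism_image1[OF homeomorphism_funpow[OF hom]] that
    by (intro always_eventually) blast
  have cont: "continuous_on X (iter_int f g m)"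
    using homeomorphism_iter_int[OF hom] by (simp add: homeomorphism_def)
  note lim = continuous_on_tendsto_compose[OF cont]
  show ?thesis
  proof (rule LIMSEQ_le_const2[OF tendsto_dist[OF lim[OF px \<open>p \<in> X\<close> orbit_X[OF \<open>x \<in> X\<close>]]
                                                  lim[OF qy \<open>q \<in> X\<close> orbit_X[OF \<open>y \<in> X\<close>]]]])
    show "\<exists>N. \<forall>k\<ge>N. dist (iter_int f g m ((f ^^ t k) x)) (iter_int f g m ((f ^^ t k) y)) \<le> c"
    proof (intro exI allI impI)
      fix k assume "nat (- m) \<le> k"
      then have "0 \<le> int (t k) + m" using seq_suble[OF t, of k] by linarith
      then show "dist (iter_int f g m ((f ^^ t k) x)) (iter_int f g m ((f ^^ t k) y)) \<le> c"
        using close iter_int_funpow[OF hom \<open>x \<in> X\<close>] iter_int_funpow[OF hom \<open>y \<in> X\<close>] by simp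
    qed
  qed
qed

lemma local_stable_subset_stable_set:
  assumes "compact X" and hom: "homeomorphism X X f g"
    and exp: "expansive_const_on (nonwandering X f) f g c" and "x \<in> X"
  shows "local_stable X f c x \<subseteq> stable_set X f x"
proof (rule subsetI, rule ccontr)
  fix y assume y: "y \<in> local_stable X f c x" "y \<notin> stable_set X f x"
  have fX: "f ` X \<subseteq> X" using hom by (simp add: homeomorphism_def)
  have "y \<in> X" using y(1) by (simp add: local_stable_def)
  obtain t p q where t: "strict_mono t" and "p \<in> X" "q \<in> X" "p \<noteq> q"
    and px: "(\<lambda>k. (f ^^ t k) x) \<longlonglongrightarrow> p" and qy: "(\<lambda>k. (f ^^ t k) y) \<longlonglongrightarrow> q"
    using not_stable_imp_distinct_limits[OF \<open>compact X\<close> fX \<open>x \<in> X\<close> \<open>y \<in> X\<close> y(2)] by blast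
  have "p \<in> nonwandering X f" "q \<in> nonwandering X f"
    using omega_limit_in_nonwandering[OF fX] \<open>x \<in> X\<close> \<open>y \<in> X\<close> t px qy \<open>p \<in> X\<close> \<open>q \<in> X\<close> by blast+
  then obtain m where "dist (iter_int f g m p) (iter_int f g m q) > c"
    using exp \<open>p \<noteq> q\<close> unfolding expansive_const_on_def by blast
  with local_stable_limits_close[OF hom \<open>x \<in> X\<close> y(1) t \<open>p \<in> X\<close> \<open>q \<in> X\<close> px qy]
  show False by (meson not_le)
qed

theorem mainTheorem14:
  fixes X :: "'a::metric_space set" and f g :: "'a \<Rightarrow> 'a" and c :: real
  assumes "compact X"
    and "homeomorphism X X f g"
    and "expansive_const_on (nonwandering X f) f g c"
    and "x \<in> X"
  shows "local_stable X f c x \<subseteq> stable_set X f x \<and> local_stable X g c x \<subseteq> stable_set X g x"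
proof
  show "local_stable X f c x \<subseteq> stable_set X f x"
    using local_stable_subset_stable_set assms by blast
  have "expansive_const_on (nonwandering X g) g f c"
    using expansive_const_on_swap[OF assms(3)] nonwandering_inverse[OF assms(2)] by simp
  then show "local_stable X g c x \<subseteq> stable_set X g x"
    using local_stable_subset_stable_set homeomorphism_symD[OF assms(2)] assms(1,4) by blast
qed

end
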